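(* Let $\lambda_0,\lambda_1\in\mathbb{R}$, $a<b$, and $f:[a,b]\to\mathbb{C}$ twice continuously differentiable. Then $$|D_{\lambda_0}f(a)|\le 4\frac{e^{(|\lambda_0|+|\lambda_1|)(b-a)}}{b-a}\max\{|f(a)|,|f(b)|\}+2\max_{t\in[a,b]}|D_{\lambda_1}D_{\lambda_0}f(t)|\,(b-a)\,e^{|\lambda_1|(b-a)}.$$
   Context: For $\lambda\in\mathbb{C}$, $D_\lambda f=f'-\lambda f$ (one-sided derivatives at endpoints). *)

theory Defs
  imports "HOL-Analysis.Analysis"
begin

text \<open>The operator D_lambda g = g' - lambda g, where the derivative g' of g is passed
explicitly (as a function on [a,b] that is the one-sided/two-sided derivative of g
within [a,b]).\<close>
definition Dop :: "complex \<Rightarrow> (real \<Rightarrow> complex) \<Rightarrow> (real \<Rightarrow> complex) \<Rightarrow> real \<Rightarrow> complex" where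
  "Dop lam g g' t = g' t - lam * g t"

end

theory Submission
  imports Defs
begin

(* Put g = D_l0 f and h = D_l1 g, and let M bound |h| on [a,b].
   Integrating factors turn the two first-order operators into plain derivatives:
     (e^{-mu (t-p)} u(t))' = e^{-mu (t-p)} (D_mu u)(t).
   (1) With phi(t) = e^{-l1 (t-a)} g(t) we get phi' = e^{-l1 (t-a)} h, hence phi stays
       within C = M (b-a) e^{|l1|(b-a)} of phi(a) = g(a) on all of [a,b].
   (2) With psi(t) = e^{-l0 (t-p)} f(t) we get psi' = w phi for a positive weight w.
       A weighted mean-value estimate then bounds |g(a)| by |psi(b)-psi(a)| divided
       by the integral of w, plus C.
   Choosing the base point p in {a,b} so that e^{-l0 (t-p)} <= 1 on [a,b] gives
   |psi(b)-psi(a)| <= 2 max(|f(a)|,|f(b)|), while w >= e^{-(|l0|+|l1|)(b-a)}. *)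

lemma Dop_of_real: "Dop (of_real \<mu>) u u' t = u' t - \<mu> *\<^sub>R u t"
  by (simp add: Dop_def scaleR_conv_of_real)

lemma abs_mult_diff_le:
  fixes x t q a b :: real
  assumes "t \<in> {a..b}" "q \<in> {a..b}"
  shows "\<bar>x * (t - q)\<bar> \<le> \<bar>x\<bar> * (b - a)"
proof -
  have "\<bar>t - q\<bar> \<le> b - a" using assms by auto
  then show ?thesis by (simp add: abs_mult mult_left_mono)
qed

lemma has_vector_derivative_integrating_factor:
  fixes u :: "real \<Rightarrow> 'a::real_normed_vector"
  assumes "(u has_vector_derivative u') (at t within S)"
  shows "((\<lambda>t. exp (- \<mu> * (t - p)) *\<^sub>R u t)
           has_vector_derivative exp (- \<mu> * (t - p)) *\<^sub>R (u' - \<mu> *\<^sub>R u t)) (at t within S)"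
proof -
  have "((\<lambda>t. exp (- \<mu> * (t - p)) *\<^sub>R u t) has_vector_derivative
          exp (- \<mu> * (t - p)) *\<^sub>R u' + (exp (- \<mu> * (t - p)) * (- \<mu>)) *\<^sub>R u t) (at t within S)"
    by (intro has_vector_derivative_scaleR assms derivative_eq_intros) auto
  moreover have "exp (- \<mu> * (t - p)) *\<^sub>R u' + (exp (- \<mu> * (t - p)) * (- \<mu>)) *\<^sub>R u t
      = exp (- \<mu> * (t - p)) *\<^sub>R (u' - \<mu> *\<^sub>R u t)"
    by (simp add: algebra_simps)
  ultimately show ?thesis by simp
qed

lemma integrating_factor_increment_bound:
  fixes u :: "real \<Rightarrow> 'a::banach"
  assumes du: "\<And>t. t \<in> {a..b} \<Longrightarrow> (u has_vector_derivative u' t) (at t within {a..b})"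
    and bound: "\<And>t. t \<in> {a..b} \<Longrightarrow> norm (u' t - \<mu> *\<^sub>R u t) \<le> M"
    and s: "s \<in> {a..b}"
  shows "norm (exp (- \<mu> * (s - a)) *\<^sub>R u s - u a) \<le> M * (b - a) * exp (\<bar>\<mu>\<bar> * (b - a))"
proof -
  define \<phi> where "\<phi> = (\<lambda>t. exp (- \<mu> * (t - a)) *\<^sub>R u t)"
  define B where "B = M * exp (\<bar>\<mu>\<bar> * (b - a))"
  have M0: "0 \<le> M" using bound[of a] s by (smt (verit) atLeastAtMost_iff norm_ge_zero)
  have int: "((\<lambda>t. exp (- \<mu> * (t - a)) *\<^sub>R (u' t - \<mu> *\<^sub>R u t)) has_integral (\<phi> s - \<phi> a)) {a..s}"
    unfolding \<phi>_def using s
    by (intro fundamental_theorem_of_calculus has_vector_derivative_integrating_factor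
        has_vector_derivative_within_subset[OF du]) auto
  have integrand_bound: "norm (exp (- \<mu> * (t - a)) *\<^sub>R (u' t - \<mu> *\<^sub>R u t)) \<le> B"
    if "t \<in> {a..s}" for t
  proof -
    have t: "t \<in> {a..b}" using that s by auto
    have "exp (- \<mu> * (t - a)) \<le> exp (\<bar>\<mu>\<bar> * (b - a))"
      using abs_mult_diff_le[OF t, of a "- \<mu>"] s by auto
    then have "exp (- \<mu> * (t - a)) * norm (u' t - \<mu> *\<^sub>R u t) \<le> exp (\<bar>\<mu>\<bar> * (b - a)) * M"
      using bound[OF t] by (intro mult_mono) auto
    then show ?thesis unfolding B_def by (simp add: mult.commute)
  qed
  have "norm (\<phi> s - \<phi> a) \<le> B * (s - a)"
    using has_integral_bound_real[OF _ finite.emptyI int] integrand_bound M0 s by (auto simp: B_def)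
  also have "\<dots> \<le> B * (b - a)"
    using s M0 unfolding B_def by (intro mult_left_mono) auto
  finally show ?thesis by (simp add: \<phi>_def B_def mult_ac)
qed

lemma weighted_mean_value_bound:
  fixes \<psi> \<phi> :: "real \<Rightarrow> 'a::banach" and w :: "real \<Rightarrow> real"
  assumes ab: "a < b" and m: "0 < m"
    and d\<psi>: "\<And>t. t \<in> {a..b} \<Longrightarrow> (\<psi> has_vector_derivative w t *\<^sub>R \<phi> t) (at t within {a..b})"
    and cw: "continuous_on {a..b} w"
    and w_low: "\<And>t. t \<in> {a..b} \<Longrightarrow> m \<le> w t"
    and close: "\<And>t. t \<in> {a..b} \<Longrightarrow> norm (\<phi> t - v) \<le> C"
  shows "norm v \<le> norm (\<psi> b - \<psi> a) / ((b - a) * m) + C"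
proof -
  define J where "J = integral {a..b} w"
  have Jw: "(w has_integral J) {a..b}"
    unfolding J_def using integrable_continuous_real[OF cw] by (simp add: has_integral_integral)
  have "((\<lambda>t. w t *\<^sub>R \<phi> t) has_integral (\<psi> b - \<psi> a)) {a..b}"
    using ab d\<psi> by (intro fundamental_theorem_of_calculus) auto
  from has_integral_diff[OF this has_integral_scaleR_left[OF Jw, of v]]
  have dev: "((\<lambda>t. w t *\<^sub>R (\<phi> t - v)) has_integral (\<psi> b - \<psi> a - J *\<^sub>R v)) {a..b}"
    by (simp add: scaleR_diff_right)
  have dev_bound: "norm (\<psi> b - \<psi> a - J *\<^sub>R v) \<le> J * C"
  proof -
    have "norm (integral {a..b} (\<lambda>t. w t *\<^sub>R (\<phi> t - v))) \<le> integral {a..b} (\<lambda>t. w t * C)"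
    proof (rule integral_norm_bound_integral)
      fix t assume "t \<in> {a..b}"
      then show "norm (w t *\<^sub>R (\<phi> t - v)) \<le> w t * C"
        using close[of t] w_low[of t] m by (simp add: mult_left_mono)
    qed (use dev has_integral_mult_left[OF Jw, of C] in blast)+
    then show ?thesis
      using integral_unique[OF dev] integral_unique[OF has_integral_mult_left[OF Jw]]
      by (simp add: J_def)
  qed
  have J_low: "(b - a) * m \<le> J"
    using has_integral_le[OF has_integral_const_real[of m a b] Jw] w_low ab by auto
  have Jpos: "0 < (b - a) * m" using ab m by simp
  have "J * norm v \<le> norm (\<psi> b - \<psi> a) + J * C"
  proof -
    have "J * norm v = norm (J *\<^sub>R v)" using J_low Jpos by simp
    also have "\<dots> \<le> norm (\<psi> b - \<psi> a) + norm (\<psi> b - \<psi> a - J *\<^sub>R v)"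
      by (metis add.commute diff_diff_eq2 diff_zero norm_minus_commute norm_triangle_sub)
    finally show ?thesis using dev_bound by simp
  qed
  then have "(norm v - C) * J \<le> norm (\<psi> b - \<psi> a)" by (simp add: algebra_simps)
  then have "norm v - C \<le> norm (\<psi> b - \<psi> a) / J"
    using J_low Jpos by (simp add: pos_le_divide_eq)
  also have "\<dots> \<le> norm (\<psi> b - \<psi> a) / ((b - a) * m)"
    using J_low Jpos by (intro divide_left_mono) auto
  finally show ?thesis by simp
qed

lemma exists_contracting_base_point:
  fixes \<mu> a b :: real
  assumes "a \<le> b"
  obtains p where "p \<in> {a..b}" "\<And>t. t \<in> {a..b} \<Longrightarrow> exp (- \<mu> * (t - p)) \<le> 1"
proof (cases "0 \<le> \<mu>")
  case True
  then show ?thesis using assms by (intro that[of a]) auto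
next
  case False
  have "exp (- \<mu> * (t - b)) \<le> 1" if "t \<le> b" for t
    using False that by (simp add: mult_nonpos_nonpos)
  then show ?thesis using assms by (intro that[of b]) auto
qed

lemma contracted_increment_bound:
  fixes u :: "real \<Rightarrow> 'a::real_normed_vector"
  assumes "exp (- \<mu> * (a - p)) \<le> 1" "exp (- \<mu> * (b - p)) \<le> 1"
  shows "norm (exp (- \<mu> * (b - p)) *\<^sub>R u b - exp (- \<mu> * (a - p)) *\<^sub>R u a)
           \<le> 2 * max (norm (u a)) (norm (u b))"
proof -
  have "norm (exp (- \<mu> * (t - p)) *\<^sub>R u t) \<le> max (norm (u a)) (norm (u b))"
    if "t \<in> {a, b}" and "exp (- \<mu> * (t - p)) \<le> 1" for t
  proof -
    have "norm (exp (- \<mu> * (t - p)) *\<^sub>R u t) \<le> norm (u t)"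
      using that(2) by (auto intro: mult_left_le_one_le)
    also have "\<dots> \<le> max (norm (u a)) (norm (u b))" using that(1) by auto
    finally show ?thesis .
  qed
  then show ?thesis using assms by (smt (verit) insertCI norm_triangle_ineq4)
qed

text \<open>The core estimate, for functions into any Banach space and with the sharper constants
  2 and 1: if g = f' - l0 f is differentiable and |g' - l1 g| <= M on [a,b], then |g(a)| is
  bounded by the boundary values of f and by M.\<close>
lemma boundary_derivative_estimate:
  fixes f f' g' :: "real \<Rightarrow> 'a::banach" and a b l0 l1 M :: real
  assumes ab: "a < b"
    and df: "\<And>t. t \<in> {a..b} \<Longrightarrow> (f has_vector_derivative f' t) (at t within {a..b})"
    and dg: "\<And>t. t \<in> {a..b} \<Longrightarrow>
               ((\<lambda>t. f' t - l0 *\<^sub>R f t) has_vector_derivative g' t) (at t within {a..b})"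
    and bound: "\<And>t. t \<in> {a..b} \<Longrightarrow> norm (g' t - l1 *\<^sub>R (f' t - l0 *\<^sub>R f t)) \<le> M"
  shows "norm (f' a - l0 *\<^sub>R f a)
    \<le> 2 * exp ((\<bar>l0\<bar> + \<bar>l1\<bar>) * (b - a)) / (b - a) * max (norm (f a)) (norm (f b))
      + M * (b - a) * exp (\<bar>l1\<bar> * (b - a))"
proof -
  define g where "g = (\<lambda>t. f' t - l0 *\<^sub>R f t)"
  define L where "L = b - a"
  define K where "K = \<bar>l0\<bar> + \<bar>l1\<bar>"
  define mx where "mx = max (norm (f a)) (norm (f b))"
  have close: "norm (exp (- l1 * (t - a)) *\<^sub>R g t - g a) \<le> M * L * exp (\<bar>l1\<bar> * L)"
    if "t \<in> {a..b}" for t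
    using integrating_factor_increment_bound[OF dg bound that] unfolding g_def L_def .
  obtain p where p: "p \<in> {a..b}" and contract: "\<And>t. t \<in> {a..b} \<Longrightarrow> exp (- l0 * (t - p)) \<le> 1"
    using exists_contracting_base_point[of a b l0] ab by auto
  define w where "w = (\<lambda>t. exp (l1 * (t - a) - l0 * (t - p)))"
  have d\<psi>: "((\<lambda>t. exp (- l0 * (t - p)) *\<^sub>R f t) has_vector_derivative
             w t *\<^sub>R (exp (- l1 * (t - a)) *\<^sub>R g t)) (at t within {a..b})" if "t \<in> {a..b}" for t
    using has_vector_derivative_integrating_factor[OF df[OF that], of l0 p]
    by (simp add: w_def g_def exp_add[symmetric] algebra_simps)
  have w_low: "exp (- K * L) \<le> w t" if "t \<in> {a..b}" for t
  proof -
    have "- (\<bar>l1\<bar> * L) \<le> l1 * (t - a)" "- (\<bar>l0\<bar> * L) \<le> - l0 * (t - p)"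
      using abs_mult_diff_le[OF that, of a l1] abs_mult_diff_le[OF that p, of l0] ab
      unfolding L_def by (auto simp: abs_le_iff)
    then show ?thesis unfolding w_def K_def by (simp add: algebra_simps)
  qed
  have cw: "continuous_on {a..b} w" unfolding w_def by (intro continuous_intros)
  have "norm (g a) \<le> norm (exp (- l0 * (b - p)) *\<^sub>R f b - exp (- l0 * (a - p)) *\<^sub>R f a)
                       / (L * exp (- K * L)) + M * L * exp (\<bar>l1\<bar> * L)"
    using weighted_mean_value_bound[OF ab exp_gt_zero d\<psi> cw w_low close] by (simp add: L_def)
  also have "\<dots> \<le> 2 * mx / (L * exp (- K * L)) + M * L * exp (\<bar>l1\<bar> * L)"
  proof -
    have "exp (- l0 * (a - p)) \<le> 1" "exp (- l0 * (b - p)) \<le> 1" using contract ab by auto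
    from contracted_increment_bound[OF this, of f] show ?thesis
      unfolding mx_def L_def using ab by (intro add_right_mono divide_right_mono) auto
  qed
  also have "2 * mx / (L * exp (- K * L)) = 2 * exp (K * L) / L * mx"
    by (simp add: exp_minus field_simps)
  finally show ?thesis unfolding g_def mx_def K_def L_def .
qed

lemma norm_le_SUP_compact:
  assumes "compact S" "continuous_on S h" "t \<in> S"
  shows "norm (h t) \<le> (SUP s\<in>S. norm (h s))"
proof (rule cSUP_upper[OF assms(3)])
  show "bdd_above ((\<lambda>s. norm (h s)) ` S)"
    using assms(1,2) by (intro bounded_imp_bdd_above compact_imp_bounded compact_continuous_image
        continuous_intros)
qed

theorem mainTheorem19:
  fixes f f' f'' :: "real \<Rightarrow> complex" and a b l0 l1 :: real
  assumes "a < b"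
    and "\<And>t. t \<in> {a..b} \<Longrightarrow> (f has_vector_derivative f' t) (at t within {a..b})"
    and "\<And>t. t \<in> {a..b} \<Longrightarrow> (f' has_vector_derivative f'' t) (at t within {a..b})"
    and "continuous_on {a..b} f''"
  shows "norm (Dop (of_real l0) f f' a)
    \<le> 4 * exp ((\<bar>l0\<bar> + \<bar>l1\<bar>) * (b - a)) / (b - a) * max (norm (f a)) (norm (f b))
      + 2 * (SUP t\<in>{a..b}. norm (Dop (of_real l1) (Dop (of_real l0) f f')
                                        (Dop (of_real l0) f' f'') t))
          * (b - a) * exp (\<bar>l1\<bar> * (b - a))"
proof -
  note ab = assms(1) and df = assms(2) and df' = assms(3)
  define h where "h = Dop (of_real l1) (Dop (of_real l0) f f') (Dop (of_real l0) f' f'')"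
  define M where "M = (SUP t\<in>{a..b}. norm (h t))"
  define E where "E = exp ((\<bar>l0\<bar> + \<bar>l1\<bar>) * (b - a)) / (b - a) * max (norm (f a)) (norm (f b))"
  have dg: "((\<lambda>t. f' t - l0 *\<^sub>R f t) has_vector_derivative Dop (of_real l0) f' f'' t)
              (at t within {a..b})" if "t \<in> {a..b}" for t
    unfolding Dop_def scaleR_conv_of_real using df[OF that] df'[OF that]
    by (intro derivative_intros)
  have "continuous_on {a..b} h"
    using continuous_on_vector_derivative[OF df] continuous_on_vector_derivative[OF df'] assms(4)
    unfolding h_def Dop_def by (intro continuous_intros) auto
  then have hM: "norm (h t) \<le> M" if "t \<in> {a..b}" for t
    unfolding M_def using norm_le_SUP_compact that by blast
  have "norm (Dop (of_real l0) f f' a) \<le> 2 * E + M * (b - a) * exp (\<bar>l1\<bar> * (b - a))"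
    using boundary_derivative_estimate[OF ab df dg, of l1 M] hM
    unfolding E_def h_def Dop_of_real by (simp add: mult.assoc)
  also have "\<dots> \<le> 4 * E + 2 * M * (b - a) * exp (\<bar>l1\<bar> * (b - a))"
  proof -
    have "0 \<le> E" using ab by (simp add: E_def le_max_iff_disj)
    moreover have "0 \<le> M" using order_trans[OF norm_ge_zero hM[of a]] ab by simp
    ultimately show ?thesis using ab by simp
  qed
  finally show ?thesis unfolding E_def M_def h_def by (simp add: mult.assoc)
qed

end
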